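(* Let $T=(V,E)$ be a finite undirected tree, let $\mathcal{O}$ be a nonempty proper subset of $V$ (the observers), and consider the infection model described in the context, with unknown source $s\in V$. Then, with probability one, $s$ does not belong to any non-feasible equivalence class $r\in[\mathcal{O}]$.
   Context: Infection model: an infection starts at time $0$ at a single node $s\in V$ (the source). For each edge $e\in E$ there is a nonnegative random delay $\tau_e$ with a continuous (atomless) distribution, and the $\tau_e$, $e\in E$, are independent. For $u,v\in V$, $[u,v]$ denotes the set of edges (or vertices, depending on context) of the unique path in $T$ between $u$ and $v$. The infection time of $v\in V$ is $\tau_v:=\sum_{e\in[s,v]}\tau_e$. Only the $\tau_o$, $o\in\mathcal{O}$, are observed. Equivalence classes: for $u,v\in V\setminus\mathcal{O}$, $u\equiv v$ iff $[u,v]\cap\mathcal{O}=\emptyset$ (vertex sets). $[\mathcal{O}]$ is the set of equivalence classes. For $r\in[\mathcal{O}]$, its boundary $\partial r$ is the set of observers adjacent to some node of $r$. For $o\in\mathcal{O}$ and a class $r$, $V_{o;r}:=\{v\in V: [o,v]\cap r=\emptyset\}$ (vertex sets), and $T_{o;r}$ is the subtree of $T$ induced on $V_{o;r}$, rooted at $o$. A class $r\in[\mathcal{O}]$ is feasible (for a given realization of the observed times) if for every $o\in\partial r$ and every $o_1,o_2\in V_{o;r}\cap\mathcal{O}$ with $o_1$ an ancestor of $o_2$ in $T_{o;r}$, one has $\tau_{o_1}\le\tau_{o_2}$. *)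

theory Defs
  imports "HOL-Probability.Probability"
begin

fun walk :: "'a set set \<Rightarrow> 'a list \<Rightarrow> bool" where
  "walk E [] = True"
| "walk E [x] = True"
| "walk E (x # y # xs) = ({x, y} \<in> E \<and> walk E (y # xs))"

definition is_path :: "'a set set \<Rightarrow> 'a \<Rightarrow> 'a \<Rightarrow> 'a list \<Rightarrow> bool" where
  "is_path E u v xs \<longleftrightarrow> xs \<noteq> [] \<and> hd xs = u \<and> last xs = v \<and> distinct xs \<and> walk E xs"

definition is_tree :: "'a set \<Rightarrow> 'a set set \<Rightarrow> bool" where
  "is_tree V E \<longleftrightarrow> finite V \<and> V \<noteq> {} \<and>
     (\<forall>e\<in>E. \<exists>x y. e = {x, y} \<and> x \<noteq> y \<and> x \<in> V \<and> y \<in> V) \<and>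
     (\<forall>u\<in>V. \<forall>v\<in>V. \<exists>!xs. is_path E u v xs)"

definition the_path :: "'a set set \<Rightarrow> 'a \<Rightarrow> 'a \<Rightarrow> 'a list" where
  "the_path E u v = (THE xs. is_path E u v xs)"

definition path_verts :: "'a set set \<Rightarrow> 'a \<Rightarrow> 'a \<Rightarrow> 'a set" where
  "path_verts E u v = set (the_path E u v)"

definition path_edges :: "'a set set \<Rightarrow> 'a \<Rightarrow> 'a \<Rightarrow> 'a set set" where
  "path_edges E u v = (let xs = the_path E u v in
      {{xs ! i, xs ! Suc i} | i. Suc i < length xs})"

definition infection_time ::
  "'a set set \<Rightarrow> 'a \<Rightarrow> ('a set \<Rightarrow> 'm \<Rightarrow> real) \<Rightarrow> 'a \<Rightarrow> 'm \<Rightarrow> real" where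
  "infection_time E s tau v w = (\<Sum>e\<in>path_edges E s v. tau e w)"

definition obs_equiv :: "'a set \<Rightarrow> 'a set set \<Rightarrow> 'a set \<Rightarrow> ('a \<times> 'a) set" where
  "obs_equiv V E Obs = {(u, v). u \<in> V - Obs \<and> v \<in> V - Obs \<and> path_verts E u v \<inter> Obs = {}}"

definition obs_classes :: "'a set \<Rightarrow> 'a set set \<Rightarrow> 'a set \<Rightarrow> 'a set set" where
  "obs_classes V E Obs = (V - Obs) // obs_equiv V E Obs"

definition boundary :: "'a set set \<Rightarrow> 'a set \<Rightarrow> 'a set \<Rightarrow> 'a set" where
  "boundary E Obs r = {ob \<in> Obs. \<exists>v\<in>r. {ob, v} \<in> E}"

definition V_or :: "'a set \<Rightarrow> 'a set set \<Rightarrow> 'a \<Rightarrow> 'a set \<Rightarrow> 'a set" where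
  "V_or V E ob r = {v \<in> V. path_verts E ob v \<inter> r = {}}"

text \<open>ob1 is an ancestor of ob2 in T_{ob;r} (rooted at ob): both lie in V_{ob;r} and ob1 lies
  on the path from the root ob to ob2 (paths in the subtree are paths of T).\<close>
definition ancestor_in :: "'a set \<Rightarrow> 'a set set \<Rightarrow> 'a \<Rightarrow> 'a set \<Rightarrow> 'a \<Rightarrow> 'a \<Rightarrow> bool" where
  "ancestor_in V E ob r ob1 ob2 \<longleftrightarrow> ob1 \<in> V_or V E ob r \<and> ob2 \<in> V_or V E ob r \<and> ob1 \<in> path_verts E ob ob2"

definition feasible ::
  "'a set \<Rightarrow> 'a set set \<Rightarrow> 'a set \<Rightarrow> 'a \<Rightarrow> ('a set \<Rightarrow> 'm \<Rightarrow> real) \<Rightarrow> 'a set \<Rightarrow> 'm \<Rightarrow> bool" where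
  "feasible V E Obs s tau r w \<longleftrightarrow>
     (\<forall>ob\<in>boundary E Obs r. \<forall>ob1\<in>V_or V E ob r \<inter> Obs. \<forall>ob2\<in>V_or V E ob r \<inter> Obs.
        ancestor_in V E ob r ob1 ob2 \<longrightarrow> infection_time E s tau ob1 w \<le> infection_time E s tau ob2 w)"

end

(* If the source s lies in the class r, then for a boundary observer ob with neighbour v in r
   and any vertex ob' of T_{ob;r}, the tree path from s to ob' is the path from s to v, which
   stays inside the connected class r, followed by the path from ob to ob', which avoids r.  Hence
   an ancestor ob1 of ob2 in T_{ob;r} lies on the path from s to ob2, and with nonnegative delays
   its infection time is at most that of ob2.  So the source's class is feasible for every outcome. *)
theory Submission
  imports Defs
begin

lemma walk_append:
  "walk E (xs @ y # ys) \<longleftrightarrow> walk E (xs @ [y]) \<and> walk E (y # ys)"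
proof (induction xs)
  case Nil
  then show ?case by (cases ys) auto
next
  case (Cons a xs)
  then show ?case by (cases xs) auto
qed

lemma walk_rev: "walk E (rev xs) \<longleftrightarrow> walk E xs"
proof (induction xs rule: induct_list012)
  case (3 a b xs)
  have "walk E (rev (a # b # xs)) \<longleftrightarrow> walk E (rev (b # xs)) \<and> walk E [b, a]"
    using walk_append[of E "rev xs" b "[a]"] by simp
  with 3 show ?case by (auto simp: insert_commute)
qed simp_all

lemma walk_join:
  assumes "walk E xs" and "walk E ys" and "xs \<noteq> []" and "ys \<noteq> []"
    and "{last xs, hd ys} \<in> E"
  shows "walk E (xs @ ys)"
  using assms
proof (induction xs rule: induct_list012)
  case (2 a)
  then show ?case by (cases ys) auto
qed auto

lemma walk_nth_edge: "walk E xs \<Longrightarrow> Suc i < length xs \<Longrightarrow> {xs ! i, xs ! Suc i} \<in> E"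
proof (induction xs arbitrary: i rule: induct_list012)
  case (3 a b xs)
  then show ?case by (cases i) auto
qed simp_all

lemma walk_set_subset:
  assumes "\<forall>e\<in>E. e \<subseteq> V" and "walk E xs" and "hd xs \<in> V"
  shows "set xs \<subseteq> V"
  using assms(2,3)
proof (induction xs rule: induct_list012)
  case (3 a b xs)
  then have "b \<in> V" using assms(1) by auto
  with 3 show ?case by auto
qed simp_all

lemma walk_imp_is_path:
  assumes "walk E xs" and "xs \<noteq> []"
  shows "\<exists>ys. is_path E (hd xs) (last xs) ys \<and> set ys \<subseteq> set xs"
  using assms
proof (induction "length xs" arbitrary: xs rule: less_induct)
  case less
  show ?case
  proof (cases "distinct xs")
    case True
    then show ?thesis using less.prems unfolding is_path_def by blast
  next
    case False
    then obtain a x b c where xs: "xs = a @ [x] @ b @ [x] @ c"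
      using not_distinct_decomp by blast
    let ?ys = "a @ x # c"
    have "walk E (a @ [x])" and "walk E ((x # b) @ x # c)"
      using less.prems(1) walk_append[of E a x "b @ x # c"] xs by auto
    then have "walk E ?ys"
      using walk_append[of E a x c] walk_append[of E "x # b" x c] by blast
    moreover have "length ?ys < length xs" using xs by simp
    ultimately obtain ys where "is_path E (hd ?ys) (last ?ys) ys" and "set ys \<subseteq> set ?ys"
      using less.hyps by blast
    moreover have "hd ?ys = hd xs" using xs by (cases a) auto
    moreover have "last ?ys = last xs" and "set ?ys \<subseteq> set xs" using xs by auto
    ultimately show ?thesis by (metis order_trans)
  qed
qed

lemma is_path_prefix: "is_path E u v (xs @ y # ys) \<Longrightarrow> is_path E u y (xs @ [y])"
  unfolding is_path_def using walk_append[of E xs y ys] by (cases xs) auto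

lemma is_path_Cons: "is_path E u v xs \<Longrightarrow> xs = u # tl xs"
  unfolding is_path_def by (cases xs) auto

definition list_edges :: "'a list \<Rightarrow> 'a set set" where
  "list_edges xs = {{xs ! i, xs ! Suc i} | i. Suc i < length xs}"

lemma path_edges_eq_list_edges: "path_edges E u v = list_edges (the_path E u v)"
  unfolding path_edges_def list_edges_def Let_def ..

lemma finite_list_edges: "finite (list_edges xs)"
proof -
  have "list_edges xs = (\<lambda>i. {xs ! i, xs ! Suc i}) ` {i. Suc i < length xs}"
    unfolding list_edges_def by auto
  moreover have "finite {i. Suc i < length xs}"
    by (rule finite_subset[of _ "{..<length xs}"]) auto
  ultimately show ?thesis by simp
qed

lemma list_edges_append_subset: "list_edges xs \<subseteq> list_edges (xs @ ys)"
proof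
  fix e assume "e \<in> list_edges xs"
  then obtain i where "Suc i < length xs" and "e = {xs ! i, xs ! Suc i}"
    unfolding list_edges_def by blast
  then show "e \<in> list_edges (xs @ ys)"
    unfolding list_edges_def by (intro CollectI exI[of _ i]) (simp add: nth_append)
qed

lemma walk_list_edges_subset: "walk E xs \<Longrightarrow> list_edges xs \<subseteq> E"
  unfolding list_edges_def using walk_nth_edge by blast

locale tree =
  fixes V :: "'a set" and E :: "'a set set"
  assumes is_tree: "is_tree V E"
begin

lemma edge_subset: "e \<in> E \<Longrightarrow> e \<subseteq> V"
  using is_tree unfolding is_tree_def by fastforce

lemma the_path_is_path: "u \<in> V \<Longrightarrow> v \<in> V \<Longrightarrow> is_path E u v (the_path E u v)"
  using is_tree unfolding is_tree_def the_path_def by (metis theI')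

lemma the_path_eqI: "u \<in> V \<Longrightarrow> v \<in> V \<Longrightarrow> is_path E u v xs \<Longrightarrow> the_path E u v = xs"
  using is_tree unfolding is_tree_def the_path_def by (metis the1_equality)

lemma is_path_set_subset: "u \<in> V \<Longrightarrow> is_path E u v xs \<Longrightarrow> set xs \<subseteq> V"
  unfolding is_path_def using walk_set_subset edge_subset by blast

lemma the_path_prefix:
  assumes "u \<in> V" and "v \<in> V" and "the_path E u v = xs @ y # ys"
  shows "the_path E u y = xs @ [y]"
proof -
  have path: "is_path E u y (xs @ [y])"
    using is_path_prefix the_path_is_path assms by metis
  then have "y \<in> V" using is_path_set_subset[OF \<open>u \<in> V\<close> path] by simp
  with path show ?thesis using the_path_eqI \<open>u \<in> V\<close> by blast
qed

lemma path_verts_subset: "u \<in> V \<Longrightarrow> v \<in> V \<Longrightarrow> path_verts E u v \<subseteq> V"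
  unfolding path_verts_def by (metis is_path_set_subset the_path_is_path)

lemma the_path_eq_append_the_path:
  assumes "u \<in> V" and "v \<in> V" and "z \<in> path_verts E u v"
  obtains ys where "the_path E u v = the_path E u z @ ys"
proof -
  obtain xs ys where split: "the_path E u v = xs @ z # ys"
    using assms(3) unfolding path_verts_def by (meson split_list)
  then have "the_path E u z = xs @ [z]" using the_path_prefix assms(1,2) by blast
  with split show thesis using that[of ys] by simp
qed

lemma path_verts_prefix_subset:
  assumes "u \<in> V" and "v \<in> V" and "z \<in> path_verts E u v"
  shows "path_verts E u z \<subseteq> path_verts E u v"
  using the_path_eq_append_the_path[OF assms] unfolding path_verts_def by (metis Un_upper1 set_append)

text \<open>The walk from x back to u and on to y contains a path from x to y, which by uniqueness
  is the path.\<close>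
lemma path_verts_subset_Un:
  assumes "u \<in> V" and "x \<in> V" and "y \<in> V"
  shows "path_verts E x y \<subseteq> path_verts E u x \<union> path_verts E u y"
proof -
  have ux: "is_path E u x (the_path E u x)" and uy: "is_path E u y (the_path E u y)"
    using the_path_is_path assms by auto
  obtain t t' where t: "the_path E u x = u # t" and t': "the_path E u y = u # t'"
    using is_path_Cons[OF ux] is_path_Cons[OF uy] by metis
  define W where "W = rev t @ u # t'"
  have "walk E (rev (u # t))" and "walk E (u # t')"
    using ux uy walk_rev unfolding t t' is_path_def by blast+
  then have "walk E W" unfolding W_def using walk_append by fastforce
  moreover have "hd W = x"
    using ux unfolding W_def t is_path_def by (cases t rule: rev_cases) auto
  moreover have "last W = y" using uy unfolding W_def t' is_path_def by simp
  ultimately obtain P where P: "is_path E x y P" and "set P \<subseteq> set W"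
    using walk_imp_is_path[of E W] unfolding W_def by auto
  moreover have "set W = path_verts E u x \<union> path_verts E u y"
    unfolding W_def path_verts_def t t' by auto
  ultimately show ?thesis
    using the_path_eqI[OF assms(2,3) P] unfolding path_verts_def by blast
qed

lemma infection_time_mono_along_path:
  assumes "s \<in> V" and "b \<in> V" and "a \<in> path_verts E s b" and "\<And>e. e \<in> E \<Longrightarrow> tau e w \<ge> 0"
  shows "infection_time E s tau a w \<le> infection_time E s tau b w"
proof -
  obtain ys where "the_path E s b = the_path E s a @ ys"
    using the_path_eq_append_the_path[OF assms(1-3)] .
  then have "path_edges E s a \<subseteq> path_edges E s b"
    unfolding path_edges_eq_list_edges by (metis list_edges_append_subset)
  moreover have "path_edges E s b \<subseteq> E"
    using the_path_is_path[OF assms(1,2)] walk_list_edges_subset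
    unfolding is_path_def path_edges_eq_list_edges by blast
  ultimately show ?thesis
    unfolding infection_time_def path_edges_eq_list_edges
    using assms(4) by (intro sum_mono2 finite_list_edges) auto
qed

lemma obs_classesE:
  assumes "r \<in> obs_classes V E Obs"
  obtains u where "u \<in> V - Obs" and "\<And>x. x \<in> r \<longleftrightarrow> x \<in> V - Obs \<and> path_verts E u x \<inter> Obs = {}"
proof -
  obtain u where "u \<in> V - Obs" and "r = obs_equiv V E Obs `` {u}"
    using assms unfolding obs_classes_def by (rule quotientE)
  then show thesis using that unfolding obs_equiv_def by blast
qed

lemma obs_class_subset: "r \<in> obs_classes V E Obs \<Longrightarrow> r \<subseteq> V - Obs"
  by (metis obs_classesE subsetI)

lemma obs_class_path_verts_subset:
  assumes r: "r \<in> obs_classes V E Obs" and "x \<in> r" and "y \<in> r"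
  shows "path_verts E x y \<subseteq> r"
proof -
  obtain u where "u \<in> V - Obs"
    and mem_r: "\<And>z. z \<in> r \<longleftrightarrow> z \<in> V - Obs \<and> path_verts E u z \<inter> Obs = {}"
    using obs_classesE[OF r] by metis
  then have "u \<in> V" by blast
  have from_u: "path_verts E u z \<subseteq> r" if "z \<in> r" for z
  proof
    fix z' assume z': "z' \<in> path_verts E u z"
    have "z \<in> V" using \<open>z \<in> r\<close> mem_r by blast
    then have "path_verts E u z' \<subseteq> path_verts E u z" and "z' \<in> V"
      using path_verts_prefix_subset path_verts_subset \<open>u \<in> V\<close> z' by blast+
    then show "z' \<in> r" using \<open>z \<in> r\<close> mem_r z' by blast
  qed
  have "x \<in> V" "y \<in> V" using \<open>x \<in> r\<close> \<open>y \<in> r\<close> mem_r by auto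
  then show ?thesis
    using path_verts_subset_Un[OF \<open>u \<in> V\<close>] from_u \<open>x \<in> r\<close> \<open>y \<in> r\<close> by blast
qed

text \<open>The path from s to v stays in r and the path from ob to ob' avoids r, so joined by the
  edge between v and ob they form a simple path.\<close>
lemma the_path_through_boundary:
  assumes r: "r \<in> obs_classes V E Obs" and "s \<in> r" and "v \<in> r" and edge: "{ob, v} \<in> E"
    and "ob' \<in> V_or V E ob r"
  shows "the_path E s ob' = the_path E s v @ the_path E ob ob'"
proof -
  have "s \<in> V" "v \<in> V" using \<open>s \<in> r\<close> \<open>v \<in> r\<close> obs_class_subset[OF r] by auto
  have "ob \<in> V" using edge_subset[OF edge] by simp
  have "ob' \<in> V" using \<open>ob' \<in> V_or V E ob r\<close> unfolding V_or_def by simp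
  have sv: "is_path E s v (the_path E s v)" and ob: "is_path E ob ob' (the_path E ob ob')"
    using the_path_is_path \<open>s \<in> V\<close> \<open>v \<in> V\<close> \<open>ob \<in> V\<close> \<open>ob' \<in> V\<close> by auto
  have "set (the_path E s v) \<subseteq> r"
    using obs_class_path_verts_subset[OF r \<open>s \<in> r\<close> \<open>v \<in> r\<close>] unfolding path_verts_def .
  moreover have "set (the_path E ob ob') \<inter> r = {}"
    using \<open>ob' \<in> V_or V E ob r\<close> unfolding V_or_def path_verts_def by blast
  ultimately have disjoint: "set (the_path E s v) \<inter> set (the_path E ob ob') = {}" by blast
  have "{last (the_path E s v), hd (the_path E ob ob')} \<in> E"
    using sv ob edge unfolding is_path_def by (simp add: insert_commute)
  then have "walk E (the_path E s v @ the_path E ob ob')"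
    using sv ob unfolding is_path_def by (intro walk_join) simp_all
  with disjoint have "is_path E s ob' (the_path E s v @ the_path E ob ob')"
    using sv ob unfolding is_path_def by simp
  then show ?thesis using the_path_eqI[OF \<open>s \<in> V\<close> \<open>ob' \<in> V\<close>] by blast
qed

lemma ancestor_in_imp_on_source_path:
  assumes "r \<in> obs_classes V E Obs" and "s \<in> r" and "ob \<in> boundary E Obs r"
    and "ancestor_in V E ob r ob1 ob2"
  shows "ob1 \<in> path_verts E s ob2"
proof -
  obtain v where "v \<in> r" and "{ob, v} \<in> E"
    using \<open>ob \<in> boundary E Obs r\<close> unfolding boundary_def by blast
  then have "the_path E s ob2 = the_path E s v @ the_path E ob ob2"
    using the_path_through_boundary[OF assms(1,2)] assms(4) unfolding ancestor_in_def
    by presburger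
  then show ?thesis using assms(4) unfolding ancestor_in_def path_verts_def by simp
qed

lemma feasible_if_source_in_class:
  assumes "r \<in> obs_classes V E Obs" and "s \<in> r" and "\<And>e. e \<in> E \<Longrightarrow> tau e w \<ge> 0"
  shows "feasible V E Obs s tau r w"
  unfolding feasible_def
proof (intro ballI impI)
  fix ob ob1 ob2 assume "ob \<in> boundary E Obs r" and anc: "ancestor_in V E ob r ob1 ob2"
  then have "ob1 \<in> path_verts E s ob2"
    by (rule ancestor_in_imp_on_source_path[OF assms(1,2)])
  moreover have "s \<in> V" using obs_class_subset[OF assms(1)] assms(2) by blast
  moreover have "ob2 \<in> V" using anc unfolding ancestor_in_def V_or_def by simp
  ultimately show "infection_time E s tau ob1 w \<le> infection_time E s tau ob2 w"
    using infection_time_mono_along_path assms(3) by metis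
qed

end

theorem lemma1:
  fixes M :: "'m measure" and V :: "'a set" and E :: "'a set set" and Obs :: "'a set"
    and s :: 'a and tau :: "'a set \<Rightarrow> 'm \<Rightarrow> real"
  assumes "prob_space M"
    and "is_tree V E"
    and "Obs \<subseteq> V" and "Obs \<noteq> {}" and "Obs \<noteq> V"
    and "s \<in> V"
    and "\<And>e. e \<in> E \<Longrightarrow> tau e \<in> borel_measurable M"
    and "\<And>e w. e \<in> E \<Longrightarrow> w \<in> space M \<Longrightarrow> tau e w \<ge> 0"
    and "\<And>e x. e \<in> E \<Longrightarrow> measure M {w \<in> space M. tau e w = x} = 0"
    and "prob_space.indep_vars M (\<lambda>_. borel) tau E"
  shows "AE w in M. \<forall>r\<in>obs_classes V E Obs. \<not> feasible V E Obs s tau r w \<longrightarrow> s \<notin> r"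
proof (rule AE_I2)
  interpret tree V E by unfold_locales (rule assms(2))
  fix w assume "w \<in> space M"
  then have nonneg: "\<And>e. e \<in> E \<Longrightarrow> tau e w \<ge> 0" using assms(8) by blast
  show "\<forall>r\<in>obs_classes V E Obs. \<not> feasible V E Obs s tau r w \<longrightarrow> s \<notin> r"
    using feasible_if_source_in_class[of _ Obs s tau w, OF _ _ nonneg] by blast
qed

end
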